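(* Let $\mathcal{D}$ be either the free associative algebra $\mathbb{K}\langle d_1,d_2,\dots\rangle$ or the commutative polynomial algebra $\mathbb{K}[d_1,d_2,\dots]$, and let $B_n$ be the Bell polynomials in $\mathcal{D}$. Then $B_0=\mathbb{I}$ and, for all $n\ge0$, $$B_{n+1}=\sum_{k=0}^n\binom{n}{k}B_{n-k}\,d_{k+1}.$$
   Context: $\mathbb{I}$ denotes the unit (empty word) of $\mathcal{D}$. Let $\partial:\mathcal{D}\to\mathcal{D}$ be the linear derivation with $\partial(d_i)=d_{i+1}$, extended by the Leibniz rule $\partial(uv)=\partial(u)v+u\partial(v)$. The Bell polynomials are defined by $B_0=\mathbb{I}$ and $B_n=(d_1+\partial)B_{n-1}=d_1B_{n-1}+\partial(B_{n-1})$ for $n>0$. *)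

theory Defs
  imports Main "HOL-Library.Poly_Mapping"
begin

text \<open>Letter i (i :: nat) stands for the generator d_(i+1).  The monoid
operation is concatenation, the unit is the empty word.\<close>

typedef word = "UNIV :: nat list set"
  morphisms letters Word by simp

setup_lifting type_definition_word

instantiation word :: monoid_add
begin
lift_definition zero_word :: word is "[]" .
lift_definition plus_word :: "word \<Rightarrow> word \<Rightarrow> word" is "(@)" .
instance by standard (transfer; simp)+
end

text \<open>Free associative algebra K<d_1,d_2,...>: finitely supported
K-valued functions on words, with convolution product.\<close>
type_synonym 'k free_alg = "word \<Rightarrow>\<^sub>0 'k"

text \<open>Commutative polynomial algebra K[d_1,d_2,...]: finitely supported
K-valued functions on monomials (finitely supported exponent vectors).\<close>
type_synonym 'k comm_alg = "(nat \<Rightarrow>\<^sub>0 nat) \<Rightarrow>\<^sub>0 'k"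

definition fgen :: "nat \<Rightarrow> 'k::field free_alg" where
  "fgen i = Poly_Mapping.single (Word [i - 1]) 1"

definition cgen :: "nat \<Rightarrow> 'k::field comm_alg" where
  "cgen i = Poly_Mapping.single (Poly_Mapping.single (i - 1) 1) 1"

definition scal :: "'k::field \<Rightarrow> ('a \<Rightarrow>\<^sub>0 'k) \<Rightarrow> ('a \<Rightarrow>\<^sub>0 'k)" where
  "scal c u = Poly_Mapping.map (\<lambda>x. c * x) u"

definition is_bell_derivation ::
  "(nat \<Rightarrow> ('a::monoid_add \<Rightarrow>\<^sub>0 'k::field)) \<Rightarrow> (('a \<Rightarrow>\<^sub>0 'k) \<Rightarrow> ('a \<Rightarrow>\<^sub>0 'k)) \<Rightarrow> bool" where
  "is_bell_derivation d D \<longleftrightarrow>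
     (\<forall>u v. D (u + v) = D u + D v) \<and>
     (\<forall>c u. D (scal c u) = scal c (D u)) \<and>
     (\<forall>u v. D (u * v) = D u * v + u * D v) \<and>
     (\<forall>i\<ge>1. D (d i) = d (Suc i))"

fun bell :: "(nat \<Rightarrow> 'r::ring_1) \<Rightarrow> ('r \<Rightarrow> 'r) \<Rightarrow> nat \<Rightarrow> 'r" where
  "bell d D 0 = 1"
| "bell d D (Suc n) = d 1 * bell d D n + D (bell d D n)"

end

theory Submission
  imports Defs
begin

text \<open>Applying d_1 + \<partial> to the expansion of B_(n+1), the
  Leibniz rule lets it act either on the factor B_(n-k), turning it into B_(n+1-k),
  or on the letter d_(k+1), turning it into d_(k+2); Pascal's rule merges the two
  resulting sums into the expansion of B_(n+2).\<close>

lemma binomial_convolution_Suc: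
  fixes b e :: "nat \<Rightarrow> 'r::ring_1"
  shows "(\<Sum>k\<le>n. of_nat (n choose k) * b (Suc n - k) * e k)
       + (\<Sum>k\<le>n. of_nat (n choose k) * b (n - k) * e (Suc k))
       = (\<Sum>k\<le>Suc n. of_nat (Suc n choose k) * b (Suc n - k) * e k)"
proof -
  have "(\<Sum>k\<le>n. of_nat (n choose k) * b (Suc n - k) * e k)
      = (\<Sum>k\<le>Suc n. of_nat (n choose k) * b (Suc n - k) * e k)"
    by (simp add: binomial_eq_0)
  also have "\<dots> = b (Suc n) * e 0 + (\<Sum>k\<le>n. of_nat (n choose Suc k) * b (n - k) * e (Suc k))"
    by (subst sum.atMost_Suc_shift) simp
  finally have shifted: "(\<Sum>k\<le>n. of_nat (n choose k) * b (Suc n - k) * e k)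
      = b (Suc n) * e 0 + (\<Sum>k\<le>n. of_nat (n choose Suc k) * b (n - k) * e (Suc k))" .
  have "(\<Sum>k\<le>Suc n. of_nat (Suc n choose k) * b (Suc n - k) * e k)
      = b (Suc n) * e 0 + (\<Sum>k\<le>n. of_nat (n choose k) * b (n - k) * e (Suc k))
        + (\<Sum>k\<le>n. of_nat (n choose Suc k) * b (n - k) * e (Suc k))"
    by (subst sum.atMost_Suc_shift)
      (simp add: sum.distrib[symmetric] distrib_right add.assoc add.commute)
  with shifted show ?thesis by (simp add: algebra_simps)
qed

locale bell_derivation =
  fixes d :: "nat \<Rightarrow> 'r::ring_1" and D :: "'r \<Rightarrow> 'r"
  assumes D_add: "\<And>u v. D (u + v) = D u + D v"
    and D_mult: "\<And>u v. D (u * v) = D u * v + u * D v"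
    and D_gen: "\<And>i. i \<ge> 1 \<Longrightarrow> D (d i) = d (Suc i)"
begin

abbreviation B :: "nat \<Rightarrow> 'r" where "B \<equiv> bell d D"

lemma D_zero: "D 0 = 0"
  using D_add[of 0 0] by simp

lemma D_one: "D 1 = 0"
  using D_mult[of 1 1] by simp

lemma D_sum: "D (sum f A) = (\<Sum>x\<in>A. D (f x))"
  by (induction A rule: infinite_finite_induct) (simp_all add: D_zero D_add)

lemma D_of_nat: "D (of_nat c) = 0"
  by (induction c) (simp_all add: D_zero D_one D_add)

lemma D_of_nat_mult_mult_gen:
  "D (of_nat c * x * d (Suc k)) = of_nat c * D x * d (Suc k) + of_nat c * x * d (k + 2)"
  by (simp add: D_mult D_of_nat D_gen distrib_left mult.assoc)

lemma bell_Suc_convolution: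
  "B (Suc n) = (\<Sum>k\<le>n. of_nat (n choose k) * B (n - k) * d (Suc k))"
proof (induction n)
  case 0
  show ?case by (simp add: D_one)
next
  case (Suc n)
  have "B (Suc (Suc n)) = d 1 * B (Suc n) + D (B (Suc n))"
    by simp
  also have "\<dots> = (\<Sum>k\<le>n. of_nat (n choose k) * (d 1 * B (n - k) + D (B (n - k))) * d (Suc k))
      + (\<Sum>k\<le>n. of_nat (n choose k) * B (n - k) * d (Suc (Suc k)))"
    unfolding Suc.IH D_sum D_of_nat_mult_mult_gen sum_distrib_left
    by (simp add: sum.distrib mult_of_nat_commute distrib_left distrib_right mult.assoc)
  also have "\<dots> = (\<Sum>k\<le>n. of_nat (n choose k) * B (Suc n - k) * d (Suc k))
      + (\<Sum>k\<le>n. of_nat (n choose k) * B (n - k) * d (Suc (Suc k)))"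
    by (simp add: Suc_diff_le)
  also have "\<dots> = (\<Sum>k\<le>Suc n. of_nat (Suc n choose k) * B (Suc n - k) * d (Suc k))"
    by (rule binomial_convolution_Suc)
  finally show ?case .
qed

end

lemma bell_derivationI:
  "is_bell_derivation d D \<Longrightarrow> bell_derivation d D"
  unfolding is_bell_derivation_def by unfold_locales auto

lemma bell_recurrence:
  assumes "is_bell_derivation d D"
  shows "bell d D 0 = 1 \<and>
         (\<forall>n. bell d D (Suc n) = (\<Sum>k = 0..n. of_nat (n choose k) * bell d D (n - k) * d (k + 1)))"
  using bell_derivation.bell_Suc_convolution[OF bell_derivationI[OF assms]]
  by (simp add: atLeast0AtMost)

theorem mainTheorem4:
  shows "(\<forall>D :: 'k::field free_alg \<Rightarrow> 'k free_alg.
            is_bell_derivation fgen D \<longrightarrow>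
              bell fgen D 0 = 1 \<and>
              (\<forall>n. bell fgen D (Suc n) =
                   (\<Sum>k = 0..n. of_nat (n choose k) * bell fgen D (n - k) * fgen (k + 1))))
       \<and> (\<forall>D :: 'k comm_alg \<Rightarrow> 'k comm_alg.
            is_bell_derivation cgen D \<longrightarrow>
              bell cgen D 0 = 1 \<and>
              (\<forall>n. bell cgen D (Suc n) =
                   (\<Sum>k = 0..n. of_nat (n choose k) * bell cgen D (n - k) * cgen (k + 1))))"
  using bell_recurrence[where d = fgen] bell_recurrence[where d = cgen] by blast

end
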